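(* There is an absolute constant $C$ such that for every odd positive integer $d$, $$\sup_{t\in(0,d^{-1/2}]}\frac{|r_d(t)|}{t}\le\frac{C}{\sqrt d}.$$
   Context: The Hermite polynomials $(H_k)_{k\ge0}$ are the orthonormal polynomials for $\mathcal{N}(0,1)$ with $\deg H_k=k$ and positive leading coefficient (the probabilist's Hermite polynomials divided by $\sqrt{k!}$). The remainder $r_d(x)$ is defined by $$H_d(x)=\exp\!\left(\frac{x^2}{4}\right)\left(\frac{2}{\pi d}\right)^{1/4}\left(\sin\!\left[\frac{1-d}{2}\pi+\sqrt d\,x\right]+r_d(x)\right).$$ *)

theory Defs
  imports Complex_Main
begin

fun hermite_prob :: "nat \<Rightarrow> real \<Rightarrow> real" where
  "hermite_prob 0 x = 1"
| "hermite_prob (Suc 0) x = x"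
| "hermite_prob (Suc (Suc k)) x = x * hermite_prob (Suc k) x - real (Suc k) * hermite_prob k x"

text \<open>Orthonormal Hermite polynomials for N(0,1): H_k = He_k / sqrt(k!).\<close>
definition hermite :: "nat \<Rightarrow> real \<Rightarrow> real" where
  "hermite k x = hermite_prob k x / sqrt (fact k)"

text \<open>The remainder r_d, defined by
  H_d(x) = exp(x^2/4) (2/(pi d))^(1/4) (sin((1-d)/2 pi + sqrt d x) + r_d(x)).\<close>
definition hermite_rem :: "nat \<Rightarrow> real \<Rightarrow> real" where
  "hermite_rem d x = hermite d x / (exp (x^2 / 4) * (2 / (pi * real d)) powr (1/4))
     - sin ((1 - real d) / 2 * pi + sqrt (real d) * x)"

end

(* Put D(x) = exp(-x^2/4) He_d(x), c = (pi d/2)^(1/4) / sqrt(d!) and theta = (1 - d) pi / 2, so that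
   r_d(x) = c D(x) - sin(theta + sqrt d x).  Weber's equation D'' = -(d + 1/2 - x^2/4) D turns into
   r_d'' + d r_d = -(1/2 - x^2/4) (r_d + sin(theta + sqrt d x)): on [0, 1/sqrt d] the remainder is a
   harmonic oscillator driven by a forcing term of size at most (1 + |r_d|)/2.  Bounding r_d'' through
   this equation by the maximum K of |r_d'| and integrating twice gives K <= 4 |r_d'(0)| + 2/sqrt d.
   For odd d = 2m+1 we have r_d(0) = 0 and r_d'(0) = +-sqrt d (x - 1) with x = c sqrt d |He_(d-1)(0)|;
   as x^4 = (pi/2) / W_m for the m-th partial Wallis product W_m, Wallis' formula yields
   1 <= x^4 <= 1 + 2/d, so |r_d'(0)| <= 2/sqrt d and |r_d(t)| <= 10 t / sqrt d. *)

theory Submission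
  imports Defs "HOL-Analysis.Gamma_Function"
begin

section \<open>Hermite polynomials and parabolic cylinder functions\<close>

lemma hermite_prob_Suc:
  "hermite_prob (Suc n) x = x * hermite_prob n x - real n * hermite_prob (n - 1) x"
  by (cases n) auto

lemma hermite_prob_has_real_derivative:
  "(hermite_prob n has_real_derivative real n * hermite_prob (n - 1) x) (at x)"
proof (induction n x rule: hermite_prob.induct)
  case (3 k x)
  have "((\<lambda>x. x * hermite_prob (Suc k) x - real (Suc k) * hermite_prob k x) has_real_derivative
      hermite_prob (Suc k) x + x * (real (Suc k) * hermite_prob k x)
        - real (Suc k) * (real k * hermite_prob (k - 1) x)) (at x)"
    using 3 by (auto intro!: derivative_eq_intros)
  moreover have "hermite_prob (Suc k) x + x * (real (Suc k) * hermite_prob k x)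
        - real (Suc k) * (real k * hermite_prob (k - 1) x) = real (Suc (Suc k)) * hermite_prob (Suc k) x"
    by (simp add: hermite_prob_Suc[of k] algebra_simps)
  ultimately show ?case
    by simp
qed simp_all

text \<open>Hermite's equation \<open>He\<^sub>n'' = x He\<^sub>n' - n He\<^sub>n\<close>, written via \<open>He\<^sub>n' = n He\<^sub>n\<^sub>-\<^sub>1\<close>.\<close>
lemma hermite_prob_ode:
  "real n * (real n - 1) * hermite_prob (n - 2) x
     = x * real n * hermite_prob (n - 1) x - real n * hermite_prob n x"
proof (cases n)
  case (Suc k)
  then have "n - 2 = k - 1"
    by simp
  then show ?thesis
    using Suc by (simp add: hermite_prob_Suc[of k] algebra_simps)
qed simp

lemma hermite_prob_odd_at_0: "hermite_prob (2 * m + 1) 0 = 0"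
  by (induction m) (simp_all add: numeral_eq_Suc)

fun odd_double_fact :: "nat \<Rightarrow> real" where
  "odd_double_fact 0 = 1"
| "odd_double_fact (Suc m) = (2 * real m + 1) * odd_double_fact m"

lemma odd_double_fact_pos: "odd_double_fact m > 0"
  by (induction m) auto

lemma hermite_prob_even_at_0: "hermite_prob (2 * m) 0 = (-1) ^ m * odd_double_fact m"
proof (induction m)
  case (Suc m)
  have "2 * Suc m = Suc (Suc (2 * m))"
    by simp
  then show ?case
    using Suc by (simp add: algebra_simps)
qed simp

definition parabolic_cylinder :: "nat \<Rightarrow> real \<Rightarrow> real" where
  "parabolic_cylinder n x = hermite_prob n x * exp (- (x^2) / 4)"

definition parabolic_cylinder_deriv :: "nat \<Rightarrow> real \<Rightarrow> real" where
  "parabolic_cylinder_deriv n x =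
     (real n * hermite_prob (n - 1) x - x / 2 * hermite_prob n x) * exp (- (x^2) / 4)"

lemma parabolic_cylinder_has_real_derivative:
  "(parabolic_cylinder n has_real_derivative parabolic_cylinder_deriv n x) (at x)"
  unfolding parabolic_cylinder_def[abs_def] parabolic_cylinder_deriv_def
  by (auto intro!: derivative_eq_intros hermite_prob_has_real_derivative simp: algebra_simps)

lemma weber_equation:
  "(parabolic_cylinder_deriv n has_real_derivative
      - (real n + 1/2 - x^2 / 4) * parabolic_cylinder n x) (at x)"
proof -
  have He': "(hermite_prob (n - 1) has_real_derivative
      real (n - 1) * hermite_prob (n - 1 - 1) x) (at x)"
    by (rule hermite_prob_has_real_derivative)
  have ode: "real (n - 1) * hermite_prob (n - 1 - 1) x * real n
      = x * real n * hermite_prob (n - 1) x - real n * hermite_prob n x"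
    using hermite_prob_ode[of n x] by (cases n) (auto simp: algebra_simps numeral_2_eq_2)
  show ?thesis
    unfolding parabolic_cylinder_deriv_def[abs_def] parabolic_cylinder_def
    apply (auto intro!: derivative_eq_intros He' hermite_prob_has_real_derivative)
    apply (simp only: ode[simplified])
    by (simp add: field_simps power2_eq_square)
qed

section \<open>Partial Wallis products\<close>

definition wallis_partial :: "nat \<Rightarrow> real" where
  "wallis_partial n = (\<Prod>k=1..n. 4 * real k^2 / (4 * real k^2 - 1))"

lemma wallis_factor_gt_1: "k \<ge> 1 \<Longrightarrow> 1 < 4 * real k^2 / (4 * real k^2 - 1)"
  by (simp add: field_simps power2_eq_square) (use mult_mono[of 1 "real k" 1 "real k"] in auto)

lemma wallis_partial_Suc:
  "wallis_partial (Suc n) = wallis_partial n * (4 * real (Suc n)^2 / (4 * real (Suc n)^2 - 1))"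
  unfolding wallis_partial_def by (simp add: prod.cl_ivl_Suc)

lemma wallis_partial_pos: "wallis_partial n > 0"
  unfolding wallis_partial_def using wallis_factor_gt_1 by (intro prod_pos) force

lemma wallis_partial_le: "wallis_partial n \<le> pi / 2"
proof -
  have "incseq wallis_partial"
  proof (rule incseq_SucI)
    fix n
    have "wallis_partial n * 1 \<le> wallis_partial n * (4 * real (Suc n)^2 / (4 * real (Suc n)^2 - 1))"
      using wallis_factor_gt_1[of "Suc n"] wallis_partial_pos[of n] by (intro mult_left_mono) auto
    then show "wallis_partial n \<le> wallis_partial (Suc n)"
      by (simp only: wallis_partial_Suc mult_1_right)
  qed
  then show ?thesis
    using wallis incseq_le unfolding wallis_partial_def[abs_def] by blast
qed

lemma wallis_partial_Suc_times:
  "wallis_partial (Suc n) * (1 + 1 / (2 * real (Suc n))) = wallis_partial n * ((2 * real n + 2) / (2 * real n + 1))"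
proof -
  have "4 * real (Suc n)^2 - 1 = (2 * real n + 1) * (2 * real n + 3)"
    by (simp add: algebra_simps power2_eq_square)
  then show ?thesis
    unfolding wallis_partial_Suc
    by (simp add: divide_simps) (simp add: algebra_simps power2_eq_square)
qed

lemma wallis_partial_ge:
  assumes "m \<ge> 1"
  shows "pi / 2 \<le> wallis_partial m * (1 + 1 / (2 * real m))"
proof -
  define V where "V n = wallis_partial (Suc n) * (1 + 1 / (2 * real (Suc n)))" for n
  have "decseq V"
  proof (rule decseq_SucI)
    fix n
    have "(2 * real (Suc n) + 2) / (2 * real (Suc n) + 1) \<le> 1 + 1 / (2 * real (Suc n))"
      by (simp add: divide_simps) (simp add: algebra_simps)
    then show "V (Suc n) \<le> V n"
      unfolding V_def wallis_partial_Suc_times[of "Suc n"]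
      by (intro mult_left_mono) (auto simp: less_imp_le wallis_partial_pos)
  qed
  moreover have "V \<longlonglongrightarrow> pi / 2"
  proof -
    have "(\<lambda>n. 1 + inverse (real n) / 2) \<longlonglongrightarrow> 1 + 0 / 2"
      by (intro tendsto_intros lim_inverse_n) auto
    moreover have "inverse (real n) / 2 = 1 / (2 * real n)" for n
      by (simp add: field_simps)
    ultimately have "(\<lambda>n. wallis_partial n * (1 + 1 / (2 * real n))) \<longlonglongrightarrow> pi / 2 * 1"
      using wallis unfolding wallis_partial_def[abs_def] by (intro tendsto_mult) auto
    then show ?thesis
      unfolding V_def using LIMSEQ_Suc by fastforce
  qed
  ultimately have "pi / 2 \<le> V (m - 1)"
    by (rule decseq_ge)
  then show ?thesis
    using assms by (simp add: V_def)
qed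

lemma wallis_partial_odd_double_fact:
  "wallis_partial m * (2 * real m + 1) * (odd_double_fact m ^ 2 / fact (2 * m))^2 = 1"
proof (induction m)
  case (Suc m)
  define q where "q = odd_double_fact m ^ 2 / fact (2 * m)"
  have fact_Suc: "fact (2 * Suc m) = (2 * real m + 2) * (2 * real m + 1) * (fact (2 * m) :: real)"
    by (simp add: algebra_simps)
  have q_Suc: "odd_double_fact (Suc m) ^ 2 / fact (2 * Suc m) = q * ((2 * real m + 1) / (2 * real m + 2))"
    unfolding fact_Suc odd_double_fact.simps q_def by (simp add: mult.commute power2_eq_square)
  have cancel: "w * (4 * r^2 / (A * C)) * C * (q * (A / (2 * r)))^2 = w * A * q^2"
    if "A > 0" "C > 0" "r > 0" for w r A C :: real
    using that by (simp add: field_simps power2_eq_square)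
  have "4 * real (Suc m)^2 - 1 = (2 * real m + 1) * (2 * real m + 3)"
    by (simp add: algebra_simps power2_eq_square)
  then have "wallis_partial (Suc m) * (2 * real (Suc m) + 1) * (q * ((2 * real m + 1) / (2 * real m + 2)))^2
      = wallis_partial m * (2 * real m + 1) * q^2"
    using cancel[of "2 * real m + 1" "2 * real m + 3" "real m + 1" "wallis_partial m"]
    by (simp add: wallis_partial_Suc algebra_simps)
  then show ?case
    using Suc by (simp only: q_Suc q_def)
qed (simp add: wallis_partial_def)

lemma odd_double_fact_ratio_bounds:
  fixes m :: nat
  defines "q \<equiv> odd_double_fact m ^ 2 / fact (2 * m)"
  shows "1 \<le> pi / 2 * (2 * real m + 1) * q^2"
    and "pi / 2 * (2 * real m + 1) * q^2 \<le> 1 + 2 / (2 * real m + 1)"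
proof -
  have "(2 * real m + 1) * q^2 = 1 / wallis_partial m"
    using wallis_partial_odd_double_fact[of m, folded q_def] wallis_partial_pos[of m]
    by (simp add: eq_divide_eq algebra_simps)
  then have eq: "pi / 2 * (2 * real m + 1) * q^2 = pi / 2 / wallis_partial m"
    by (simp add: mult.assoc)
  show "1 \<le> pi / 2 * (2 * real m + 1) * q^2"
    unfolding eq using wallis_partial_le[of m] wallis_partial_pos[of m] by simp
  show "pi / 2 * (2 * real m + 1) * q^2 \<le> 1 + 2 / (2 * real m + 1)"
  proof (cases "m = 0")
    case True
    then show ?thesis
      unfolding eq using pi_less_4 by (simp add: wallis_partial_def)
  next
    case False
    then have "pi / 2 / wallis_partial m \<le> 1 + 1 / (2 * real m)"
      using wallis_partial_ge[of m] wallis_partial_pos[of m] by (simp add: pos_divide_le_eq mult.commute)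
    also have "\<dots> \<le> 1 + 2 / (2 * real m + 1)"
      using False by (simp add: field_simps)
    finally show ?thesis
      unfolding eq .
  qed
qed

section \<open>A perturbed harmonic oscillator\<close>

lemma abs_diff_le_of_deriv_bound:
  fixes f \<phi> :: "real \<Rightarrow> real"
  assumes "a \<le> b"
    and "\<And>x. (f has_real_derivative f' x) (at x)"
    and "\<And>x. (\<phi> has_real_derivative \<phi>' x) (at x)"
    and "\<And>x. a \<le> x \<Longrightarrow> x \<le> b \<Longrightarrow> \<bar>f' x\<bar> \<le> \<phi>' x"
  shows "\<bar>f b - f a\<bar> \<le> \<phi> b - \<phi> a"
proof (cases "a = b")
  case False
  then show ?thesis
    using differentiable_bound_general[of a b f \<phi> f' \<phi>'] assms
    by (auto simp: has_real_derivative_iff_has_vector_derivative[symmetric]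
        intro!: continuous_at_imp_continuous_on DERIV_isCont)
qed simp

lemma oscillator_perturbation_linear_bound:
  fixes h h' h'' :: "real \<Rightarrow> real" and D :: real
  assumes D: "D \<ge> 1"
    and h': "\<And>x. (h has_real_derivative h' x) (at x)"
    and h'': "\<And>x. (h' has_real_derivative h'' x) (at x)"
    and h0: "h 0 = 0"
    and perturbation: "\<And>s. 0 \<le> s \<Longrightarrow> s \<le> 1 / sqrt D \<Longrightarrow> \<bar>h'' s + D * h s\<bar> \<le> (1 + \<bar>h s\<bar>) / 2"
    and t: "0 \<le> t" "t \<le> 1 / sqrt D"
  shows "\<bar>h t\<bar> \<le> (4 * \<bar>h' 0\<bar> + 2 / sqrt D) * t"
proof -
  define T where "T = 1 / sqrt D"
  have T: "0 < T" "T \<le> 1" "D * T^2 = 1"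
    using D by (auto simp: T_def power_divide)
  have "continuous_on {0..T} (\<lambda>s. \<bar>h' s\<bar>)"
    using DERIV_isCont[OF h''] by (intro continuous_intros continuous_at_imp_continuous_on) auto
  then obtain s0 where s0: "0 \<le> s0" "s0 \<le> T" and max: "\<And>s. 0 \<le> s \<Longrightarrow> s \<le> T \<Longrightarrow> \<bar>h' s\<bar> \<le> \<bar>h' s0\<bar>"
    using continuous_attains_sup[of "{0..T}" "\<lambda>s. \<bar>h' s\<bar>"] T by auto
  define K where "K = \<bar>h' s0\<bar>"
  have h_le: "\<bar>h s\<bar> \<le> K * s" if "0 \<le> s" "s \<le> T" for s
    using abs_diff_le_of_deriv_bound[of 0 s h h' "\<lambda>x. K * x" "\<lambda>_. K"] that h' max h0
    unfolding K_def by (auto intro!: derivative_eq_intros)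
  have h''_le: "\<bar>h'' s\<bar> \<le> K * (D + 1/2) * s + 1/2" if "0 \<le> s" "s \<le> T" for s
  proof -
    have "\<bar>h'' s\<bar> \<le> \<bar>h'' s + D * h s\<bar> + D * \<bar>h s\<bar>"
      using D abs_triangle_ineq[of "h'' s + D * h s" "- D * h s"] by (simp add: abs_mult)
    also have "\<dots> \<le> (1 + K * s) / 2 + D * (K * s)"
      using perturbation[of s] h_le[OF that] that D unfolding T_def
      by (intro add_mono mult_left_mono divide_right_mono) auto
    finally show ?thesis
      by (simp add: algebra_simps add_divide_distrib)
  qed
  \<comment> \<open>The equation bounds \<open>h''\<close> in terms of \<open>K\<close>; integrating back at the maximiser of
    \<open>|h'|\<close> gives \<open>K \<le> |h' 0| + 3/4 K + T/2\<close>.\<close>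
  have "((\<lambda>x. K * (D + 1/2) * x^2 / 2 + x / 2) has_real_derivative K * (D + 1/2) * x + 1/2) (at x)" for x
    by (auto intro!: derivative_eq_intros)
  then have "\<bar>h' s0 - h' 0\<bar> \<le> K * (D + 1/2) * s0^2 / 2 + s0 / 2 - (K * (D + 1/2) * 0^2 / 2 + 0 / 2)"
    by (rule abs_diff_le_of_deriv_bound[OF s0(1) h'']) (use h''_le s0 in auto)
  also have "\<dots> = K * (D + 1/2) * s0^2 / 2 + s0 / 2"
    by simp
  also have "\<dots> \<le> K * (D + 1/2) * T^2 / 2 + T / 2"
    using s0 D K_def by (intro add_mono divide_right_mono mult_left_mono power_mono) auto
  also have "\<dots> = K / 2 + K * T^2 / 4 + T / 2"
    using T(3) by (simp add: algebra_simps)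
  also have "\<dots> \<le> K / 2 + K / 4 + T / 2"
    using T K_def power_le_one[of T 2] by (intro add_mono divide_right_mono mult_left_le) auto
  finally have "K \<le> 4 * \<bar>h' 0\<bar> + 2 * T"
    unfolding K_def by linarith
  then have "K * t \<le> (4 * \<bar>h' 0\<bar> + 2 * T) * t"
    using t by (intro mult_right_mono) auto
  with h_le[of t] t show ?thesis
    unfolding T_def by simp
qed

section \<open>The remainder \<open>r\<^sub>d\<close>\<close>

definition hermite_scale :: "nat \<Rightarrow> real" where
  "hermite_scale d = (pi * real d / 2) powr (1/4) / sqrt (fact d)"

definition hermite_phase :: "nat \<Rightarrow> real" where
  "hermite_phase d = (1 - real d) / 2 * pi"

definition hermite_rem_deriv :: "nat \<Rightarrow> real \<Rightarrow> real" where
  "hermite_rem_deriv d x = hermite_scale d * parabolic_cylinder_deriv d x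
     - sqrt (real d) * cos (hermite_phase d + sqrt (real d) * x)"

lemma hermite_rem_eq_parabolic_cylinder:
  assumes "d > 0"
  shows "hermite_rem d x = hermite_scale d * parabolic_cylinder d x - sin (hermite_phase d + sqrt (real d) * x)"
proof -
  have "(2 / (pi * real d)) powr (1/4) = 1 / (pi * real d / 2) powr (1/4)"
    using assms by (simp add: powr_divide)
  then show ?thesis
    unfolding hermite_rem_def hermite_def parabolic_cylinder_def hermite_scale_def hermite_phase_def
    by (simp add: exp_minus field_simps)
qed

lemma hermite_rem_has_real_derivative:
  assumes "d > 0"
  shows "(hermite_rem d has_real_derivative hermite_rem_deriv d x) (at x)"
  unfolding hermite_rem_eq_parabolic_cylinder[OF assms, abs_def] hermite_rem_deriv_def
  by (auto intro!: derivative_eq_intros parabolic_cylinder_has_real_derivative)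

lemma hermite_rem_deriv_has_real_derivative:
  assumes "d > 0"
  shows "(hermite_rem_deriv d has_real_derivative
      - real d * hermite_rem d x - (1/2 - x^2 / 4) * (hermite_rem d x + sin (hermite_phase d + sqrt (real d) * x)))
      (at x)"
proof -
  have "sqrt (real d) * (sqrt (real d) * y) = real d * y" for y
    by (simp flip: mult.assoc)
  then show ?thesis
    unfolding hermite_rem_deriv_def[abs_def] hermite_rem_eq_parabolic_cylinder[OF assms]
    by (auto intro!: derivative_eq_intros weber_equation simp: algebra_simps)
qed

lemma hermite_rem_odd_at_0:
  assumes "odd d"
  shows "hermite_rem d 0 = 0"
proof -
  obtain m where d: "d = 2 * m + 1"
    using assms oddE by blast
  have "hermite_phase d = - (real m * pi)"
    using d by (simp add: hermite_phase_def field_simps)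
  then show ?thesis
    using d hermite_prob_odd_at_0[of m]
    by (simp add: hermite_rem_eq_parabolic_cylinder parabolic_cylinder_def)
qed

lemma abs_sub_one_le_power4:
  fixes x :: real
  assumes "x \<ge> 0"
  shows "\<bar>x - 1\<bar> \<le> \<bar>x^4 - 1\<bar>"
proof -
  have "x^4 - 1 = (x - 1) * ((x + 1) * (x^2 + 1))"
    by (simp add: algebra_simps power2_eq_square power4_eq_xxxx)
  moreover have "1 \<le> (x + 1) * (x^2 + 1)"
    using assms by (simp add: algebra_simps add_increasing)
  ultimately show ?thesis
    using assms by (simp add: abs_mult mult_le_cancel_left1)
qed

lemma hermite_rem_deriv_odd_at_0_eq:
  assumes d: "d = 2 * m + 1"
  shows "hermite_rem_deriv d 0
    = (-1) ^ m * sqrt (real d) * ((pi * real d / 2) powr (1/4) * odd_double_fact m / sqrt (fact (2 * m)) - 1)"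
proof -
  have sqrt_fact: "sqrt (fact d) = sqrt (real d) * sqrt (fact (2 * m))"
    using d by (simp add: real_sqrt_mult)
  have phase: "hermite_phase d = - (real m * pi)"
    using d by (simp add: hermite_phase_def field_simps)
  have "parabolic_cylinder_deriv d 0 = real d * (-1) ^ m * odd_double_fact m"
    using d hermite_prob_even_at_0[of m] by (simp add: parabolic_cylinder_deriv_def)
  then have "hermite_scale d * parabolic_cylinder_deriv d 0
      = (-1) ^ m * (real d / sqrt (real d)) * ((pi * real d / 2) powr (1/4) * odd_double_fact m / sqrt (fact (2 * m)))"
    unfolding hermite_scale_def sqrt_fact by (simp add: field_simps)
  then show ?thesis
    unfolding hermite_rem_deriv_def phase by (simp add: real_div_sqrt algebra_simps)
qed

lemma hermite_rem_deriv_odd_at_0: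
  assumes d: "d = 2 * m + 1"
  shows "\<bar>hermite_rem_deriv d 0\<bar> \<le> 2 / sqrt (real d)"
proof -
  define a where "a = (pi * real d / 2) powr (1/4)"
  define F where "F = (fact (2 * m) :: real)"
  define x where "x = a * odd_double_fact m / sqrt F"
  have D: "real d = 2 * real m + 1"
    using d by simp
  have F: "F > 0"
    by (simp add: F_def)
  have a4: "a^4 = pi / 2 * (2 * real m + 1)"
    unfolding a_def using D by (simp add: powr_power)
  have "sqrt F ^ 4 = F^2"
    using F power_mult[of "sqrt F" 2 2] by simp
  then have "x^4 = a^4 * (odd_double_fact m ^ 2 / F)^2"
    unfolding x_def by (simp add: power_mult_distrib power_divide flip: power_mult)
  then have "x^4 = pi / 2 * (2 * real m + 1) * (odd_double_fact m ^ 2 / F)^2"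
    unfolding a4 .
  moreover have "x \<ge> 0"
    using F odd_double_fact_pos[of m] by (simp add: x_def a_def)
  ultimately have x_close: "\<bar>x - 1\<bar> \<le> 2 / real d"
    using abs_sub_one_le_power4[of x] odd_double_fact_ratio_bounds[of m] D by (simp add: F_def)
  have "\<bar>hermite_rem_deriv d 0\<bar> = sqrt (real d) * \<bar>x - 1\<bar>"
    unfolding hermite_rem_deriv_odd_at_0_eq[OF d] x_def a_def F_def by (simp add: abs_mult)
  also have "\<dots> \<le> sqrt (real d) * (2 / real d)"
    using x_close by (rule mult_left_mono) simp
  also have "\<dots> = 2 / sqrt (real d)"
    using d by (simp add: field_simps real_sqrt_mult_self flip: real_sqrt_mult)
  finally show ?thesis .
qed

lemma forcing_term_le:
  fixes s y z :: real
  assumes "\<bar>s\<bar> \<le> 1"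
  shows "\<bar>(1/2 - s^2 / 4) * (y + sin z)\<bar> \<le> (1 + \<bar>y\<bar>) / 2"
proof -
  have weight: "0 \<le> 1/2 - s^2 / 4" "1/2 - s^2 / 4 \<le> 1/2"
    using assms power_le_one[of "\<bar>s\<bar>" 2] by auto
  have "\<bar>y + sin z\<bar> \<le> \<bar>y\<bar> + 1"
    using abs_triangle_ineq[of y "sin z"] abs_sin_le_one[of z] by linarith
  then have "(1/2 - s^2 / 4) * \<bar>y + sin z\<bar> \<le> 1/2 * (\<bar>y\<bar> + 1)"
    using weight by (intro mult_mono) auto
  then show ?thesis
    using weight by (simp add: abs_mult)
qed

lemma hermite_rem_odd_linear_bound:
  assumes "odd d" "0 \<le> t" "t \<le> 1 / sqrt (real d)"
  shows "\<bar>hermite_rem d t\<bar> \<le> 10 / sqrt (real d) * t"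
proof -
  obtain m where d: "d = 2 * m + 1"
    using assms(1) oddE by blast
  have D: "real d \<ge> 1"
    using d by simp
  have "1 / sqrt (real d) \<le> 1"
    using D by simp
  then have "\<bar>s\<bar> \<le> 1" if "0 \<le> s" "s \<le> 1 / sqrt (real d)" for s
    using that by linarith
  then have "\<bar>(- real d * hermite_rem d s - (1/2 - s^2 / 4) * (hermite_rem d s + sin (hermite_phase d + sqrt (real d) * s)))
      + real d * hermite_rem d s\<bar> \<le> (1 + \<bar>hermite_rem d s\<bar>) / 2" if "0 \<le> s" "s \<le> 1 / sqrt (real d)" for s
    using forcing_term_le that by simp
  from oscillator_perturbation_linear_bound[OF D hermite_rem_has_real_derivative
      hermite_rem_deriv_has_real_derivative hermite_rem_odd_at_0 this] d assms
  have "\<bar>hermite_rem d t\<bar> \<le> (4 * \<bar>hermite_rem_deriv d 0\<bar> + 2 / sqrt (real d)) * t"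
    by simp
  also have "\<dots> \<le> 10 / sqrt (real d) * t"
    using hermite_rem_deriv_odd_at_0[OF d] assms(2) by (intro mult_right_mono) auto
  finally show ?thesis .
qed

theorem corollaryA9:
  shows "\<exists>C::real. \<forall>d::nat. odd d \<longrightarrow>
           (\<forall>t::real. 0 < t \<and> t \<le> 1 / sqrt (real d) \<longrightarrow>
              \<bar>hermite_rem d t\<bar> / t \<le> C / sqrt (real d))"
proof (intro exI allI impI)
  fix d :: nat and t :: real
  assume "odd d" and t: "0 < t \<and> t \<le> 1 / sqrt (real d)"
  then have "\<bar>hermite_rem d t\<bar> \<le> 10 / sqrt (real d) * t"
    by (intro hermite_rem_odd_linear_bound) auto
  then show "\<bar>hermite_rem d t\<bar> / t \<le> 10 / sqrt (real d)"
    using t by (simp add: pos_divide_le_eq)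
qed

end
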